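(* For a parking graph $P$ on $[n]$, let $\psi(P)\subseteq\mathbb{R}^n$ be the set of all $\mathbf{x}$ satisfying: $x_j-x_k\ge 1$ for every down edge $j\leftarrow k$ of $P$; $0\le x_j-x_k\le 1$ for every downish edge $jk$ of $P$ ($j<k$); and $x_j-x_k\le 0$ for every up edge $j\rightarrow k$ of $P$. Then for every parking graph $P$ the set $\psi(P)$ has nonempty interior and its interior is a region of the $n$-dimensional Shi arrangement; and the map sending $P$ to the interior of $\psi(P)$ is a bijection between the set of parking graphs on $[n]$ and the set of regions of the $n$-dimensional Shi arrangement.
   Context: The $n$-dimensional Shi arrangement is the set of hyperplanes in $\mathbb{R}^n$ given by $x_j-x_k=0$ and $x_j-x_k=1$ for all $1\le j<k\le n$. A region of it is a connected component of the complement in $\mathbb{R}^n$ of the union of these hyperplanes. A mixed graph may contain both undirected and directed edges. A parking graph $P$ on $[n]$ is a mixed graph with vertex set $[n]$ in which every pair $\{j,k\}$ with $1\le j<k\le n$ is joined by exactly one edge, which is of exactly one of three types: a down edge $j\leftarrow k$ (directed from $k$ to $j$), an up edge $j\rightarrow k$ (directed from $j$ to $k$), or a downish edge $jk$ (undirected). Let $\vec P$ be the directed graph obtained from $P$ by keeping all directed edges and replacing every downish edge $jk$ ($j<k$) by the directed edge $j\leftarrow k$. $P$ must satisfy the source-sink condition: (i) $\vec P$ is acyclic, and (ii) for every triangle of $P$ among whose three edges there is at least one down edge and at least one downish edge, the source (vertex of in-degree $0$ within the triangle in $\vec P$) and the sink (vertex of out-degree $0$ within the triangle in $\vec P$) are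 not joined by a downish edge in $P$. *)

theory Defs
  imports "HOL-Analysis.Analysis"
begin

text \<open>The vertex set [n] is modelled by a finite linearly ordered type 'n
  (every finite linear order of size n is order-isomorphic to [n]);
  R^n is real ^ 'n.\<close>

datatype edge_kind = DownE | UpE | DownishE

text \<open>A mixed graph with exactly one edge between each pair j < k is encoded by
  P :: 'n => 'n => edge_kind, where P j k (j < k) is the kind of the edge jk:
  DownE means j <- k, UpE means j -> k, DownishE means undirected jk.
  Values P j k with not (j < k) are irrelevant and normalised to DownE.\<close>

definition normalised_mg :: "('n::linorder \<Rightarrow> 'n \<Rightarrow> edge_kind) \<Rightarrow> bool" where
  "normalised_mg P \<longleftrightarrow> (\<forall>j k. \<not> j < k \<longrightarrow> P j k = DownE)"

definition ekind :: "('n::linorder \<Rightarrow> 'n \<Rightarrow> edge_kind) \<Rightarrow> 'n \<Rightarrow> 'n \<Rightarrow> edge_kind" where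
  "ekind P u v = (if u < v then P u v else P v u)"

text \<open>Arcs of the directed graph vec P: arc u v means an arc from u to v.
  Down edge j <- k and downish edge jk (j<k) give arc k -> j; up edge j -> k gives j -> k.\<close>
definition arc :: "('n::linorder \<Rightarrow> 'n \<Rightarrow> edge_kind) \<Rightarrow> 'n \<Rightarrow> 'n \<Rightarrow> bool" where
  "arc P u v \<longleftrightarrow> (u < v \<and> P u v = UpE) \<or> (v < u \<and> P v u \<noteq> UpE)"

definition source_sink_condition :: "('n::linorder \<Rightarrow> 'n \<Rightarrow> edge_kind) \<Rightarrow> bool" where
  "source_sink_condition P \<longleftrightarrow>
     acyclic {(u, v). arc P u v} \<and>
     (\<forall>a b c. a \<noteq> b \<and> b \<noteq> c \<and> a \<noteq> c \<and>
        (\<exists>u\<in>{a,b,c}. \<exists>v\<in>{a,b,c}. u \<noteq> v \<and> ekind P u v = DownE) \<and>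
        (\<exists>u\<in>{a,b,c}. \<exists>v\<in>{a,b,c}. u \<noteq> v \<and> ekind P u v = DownishE) \<longrightarrow>
        (\<forall>s\<in>{a,b,c}. \<forall>t\<in>{a,b,c}.
           s \<noteq> t \<and> (\<forall>u\<in>{a,b,c}. \<not> arc P u s) \<and> (\<forall>u\<in>{a,b,c}. \<not> arc P t u)
           \<longrightarrow> ekind P s t \<noteq> DownishE))"

definition parking_graph :: "('n::linorder \<Rightarrow> 'n \<Rightarrow> edge_kind) \<Rightarrow> bool" where
  "parking_graph P \<longleftrightarrow> normalised_mg P \<and> source_sink_condition P"

definition psi :: "('n::{finite,linorder} \<Rightarrow> 'n \<Rightarrow> edge_kind) \<Rightarrow> (real ^ 'n::{finite,linorder}) set" where
  "psi P = {x. \<forall>j k. j < k \<longrightarrow>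
      (P j k = DownE \<longrightarrow> x $ j - x $ k \<ge> 1) \<and>
      (P j k = DownishE \<longrightarrow> 0 \<le> x $ j - x $ k \<and> x $ j - x $ k \<le> 1) \<and>
      (P j k = UpE \<longrightarrow> x $ j - x $ k \<le> 0)}"

definition shi_union :: "(real ^ 'n::{finite,linorder}) set" where
  "shi_union = {x. \<exists>j k. j < k \<and> (x $ j - x $ k = 0 \<or> x $ j - x $ k = 1)}"

definition shi_regions :: "(real ^ 'n::{finite,linorder}) set set" where
  "shi_regions = {connected_component_set (- shi_union) x | x. x \<notin> shi_union}"

end

theory Submission
  imports Defs
begin

text \<open>
  For a mixed graph P let \<open>cell P\<close> be the set defined by the strict versions of the
  inequalities of \<open>psi P\<close>.  The proof has three parts.
  (1) Geometry: \<open>cell P\<close> is open and convex and equals the interior of \<open>psi P\<close>; a point x off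
      the arrangement has a sign pattern \<open>pattern x\<close> (the kind of each difference x_j - x_k),
      and the Shi region containing x is exactly \<open>cell (pattern x)\<close>.
  (2) Realization: every parking graph has a point in its cell.  Coordinates are chosen one
      vertex at a time, always adding a sink of the acyclic tournament of P; the required
      interval for the new coordinate is nonempty because no down edge is nested inside a
      downish edge, a consequence of the source-sink condition.
  (3) Conversely, the sign pattern of every point off the arrangement is a parking graph.
  Hence parking graphs are exactly the sign patterns, and \<open>P \<mapsto> interior (psi P)\<close> is the
  bijection of the theorem.
\<close>

definition open_range :: "edge_kind \<Rightarrow> real set" where
  "open_range e = (case e of DownE \<Rightarrow> {1<..} | DownishE \<Rightarrow> {0<..<1} | UpE \<Rightarrow> {..<0})"

definition closed_range :: "edge_kind \<Rightarrow> real set" where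
  "closed_range e = (case e of DownE \<Rightarrow> {1..} | DownishE \<Rightarrow> {0..1} | UpE \<Rightarrow> {..0})"

definition cell :: "('n::{finite,linorder} \<Rightarrow> 'n \<Rightarrow> edge_kind) \<Rightarrow> (real ^ 'n::{finite,linorder}) set" where
  "cell P = {x. \<forall>j k. j < k \<longrightarrow> x $ j - x $ k \<in> open_range (P j k)}"

lemma psi_closed_range:
  "psi P = {x. \<forall>j k. j < k \<longrightarrow> x $ j - x $ k \<in> closed_range (P j k)}"
  unfolding psi_def closed_range_def by (auto split: edge_kind.split)

lemma linear_coord_diff: "linear (\<lambda>x::real ^ 'n::finite. x $ j - x $ k)"
  by (intro linear_compose_sub bounded_linear.linear[OF bounded_linear_vec_nth])

lemma continuous_coord_diff: "continuous_on UNIV (\<lambda>x::real ^ 'n::finite. x $ j - x $ k)"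
  by (intro continuous_intros linear_continuous_on bounded_linear_vec_nth)

lemma cell_as_Inter:
  "cell P = (\<Inter>(j, k)\<in>{(j, k). j < k}. (\<lambda>x. x $ j - x $ k) -` open_range (P j k))"
  unfolding cell_def by auto

lemma open_cell:
  fixes P :: "'n::{finite,linorder} \<Rightarrow> 'n \<Rightarrow> edge_kind"
  shows "open (cell P)"
proof -
  have "open ((\<lambda>x::(real, 'n) vec. x $ j - x $ k) -` open_range e)" for j k :: 'n and e
    by (rule open_vimage[OF _ continuous_coord_diff])
       (simp add: open_range_def split: edge_kind.split)
  then show ?thesis
    unfolding cell_as_Inter by (intro open_INT) auto
qed

lemma convex_cell:
  fixes P :: "'n::{finite,linorder} \<Rightarrow> 'n \<Rightarrow> edge_kind"
  shows "convex (cell P)"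
proof -
  have "convex ((\<lambda>x::(real, 'n) vec. x $ j - x $ k) -` open_range e)" for j k :: 'n and e
    by (rule convex_linear_vimage[OF linear_coord_diff])
       (auto simp: open_range_def split: edge_kind.split)
  then show ?thesis
    unfolding cell_as_Inter by (intro convex_INT) auto
qed

lemma open_range_subset_closed_range: "open_range e \<subseteq> closed_range e"
  by (cases e) (auto simp: open_range_def closed_range_def)

lemma closed_range_perturb:
  assumes "0 < \<epsilon>" and "\<And>s. \<bar>s\<bar> < \<epsilon> \<Longrightarrow> d + s \<in> closed_range e"
  shows "d \<in> open_range e"
proof -
  have "d + \<epsilon>/2 \<in> closed_range e" "d - \<epsilon>/2 \<in> closed_range e"
    using assms(2)[of "\<epsilon>/2"] assms(2)[of "-\<epsilon>/2"] \<open>0 < \<epsilon>\<close> by auto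
  with \<open>0 < \<epsilon>\<close> show ?thesis
    by (cases e) (auto simp: open_range_def closed_range_def)
qed

text \<open>The interior of \<open>psi P\<close> is the open cell: moving one coordinate x_j perturbs each
  difference x_j - x_k on its own, so every defining inequality must be strict in the interior.\<close>
lemma interior_psi: "interior (psi P) = cell P"
proof
  have "cell P \<subseteq> psi P"
    using open_range_subset_closed_range unfolding cell_def psi_closed_range by blast
  then show "cell P \<subseteq> interior (psi P)"
    by (rule interior_maximal[OF _ open_cell])
next
  show "interior (psi P) \<subseteq> cell P"
  proof
    fix x assume "x \<in> interior (psi P)"
    then obtain \<epsilon> where "0 < \<epsilon>" and ball: "ball x \<epsilon> \<subseteq> psi P"
      by (meson mem_interior)
    have "x $ j - x $ k \<in> open_range (P j k)" if "j < k" for j k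
    proof (rule closed_range_perturb[OF \<open>0 < \<epsilon>\<close>])
      fix s :: real assume "\<bar>s\<bar> < \<epsilon>"
      moreover have "axis j s = s *\<^sub>R axis j (1::real)"
        by (simp add: axis_def vec_eq_iff)
      ultimately have "x + axis j s \<in> psi P"
        using ball by (auto simp: dist_norm)
      moreover have "(x + axis j s) $ j - (x + axis j s) $ k = x $ j - x $ k + s"
        using \<open>j < k\<close> by (simp add: axis_def)
      ultimately show "x $ j - x $ k + s \<in> closed_range (P j k)"
        using \<open>j < k\<close> unfolding psi_closed_range by (metis (no_types, lifting) mem_Collect_eq)
    qed
    then show "x \<in> cell P" unfolding cell_def by blast
  qed
qed

definition kind_of :: "real \<Rightarrow> edge_kind" where
  "kind_of d = (if 1 < d then DownE else if 0 < d then DownishE else UpE)"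

definition pattern :: "real ^ 'n::{finite,linorder} \<Rightarrow> 'n \<Rightarrow> 'n \<Rightarrow> edge_kind" where
  "pattern x j k = (if j < k then kind_of (x $ j - x $ k) else DownE)"

lemma not_in_shi_union:
  "x \<notin> shi_union \<longleftrightarrow> (\<forall>j k. j < k \<longrightarrow> x $ j - x $ k \<noteq> 0 \<and> x $ j - x $ k \<noteq> 1)"
  unfolding shi_union_def by blast

lemma open_range_iff_kind_of:
  assumes "d \<noteq> 0" "d \<noteq> 1"
  shows "d \<in> open_range e \<longleftrightarrow> e = kind_of d"
  using assms by (cases e) (auto simp: open_range_def kind_of_def)

lemma open_range_avoids: "d \<in> open_range e \<Longrightarrow> d \<noteq> 0 \<and> d \<noteq> 1"
  by (cases e) (auto simp: open_range_def)

lemma cell_avoids_shi_union: "x \<in> cell P \<Longrightarrow> x \<notin> shi_union"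
  unfolding cell_def not_in_shi_union using open_range_avoids by blast

lemma pattern_normalised: "normalised_mg (pattern x)"
  unfolding normalised_mg_def pattern_def by simp

lemma cell_iff_pattern:
  assumes "normalised_mg P" and "x \<notin> shi_union"
  shows "x \<in> cell P \<longleftrightarrow> P = pattern x"
proof -
  have "x \<in> cell P \<longleftrightarrow> (\<forall>j k. j < k \<longrightarrow> P j k = kind_of (x $ j - x $ k))"
    using assms(2) open_range_iff_kind_of unfolding cell_def not_in_shi_union by blast
  also have "\<dots> \<longleftrightarrow> P = pattern x"
    using assms(1) unfolding normalised_mg_def pattern_def by (auto simp: fun_eq_iff)
  finally show ?thesis .
qed

lemma kind_of_constant_on_interval:
  assumes "connected S" "0 \<notin> S" "1 \<notin> S" "d \<in> S" "d' \<in> S"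
  shows "kind_of d = kind_of d'"
proof -
  have "{d..d'} \<subseteq> S" "{d'..d} \<subseteq> S"
    using assms(1,4,5) connected_contains_Icc by blast+
  then have "\<not> (d \<le> c \<and> c \<le> d')" "\<not> (d' \<le> c \<and> c \<le> d)" if "c \<notin> S" for c
    using that by auto
  from this[OF assms(2)] this[OF assms(3)] show ?thesis
    unfolding kind_of_def by auto
qed

lemma pattern_constant_on_connected:
  fixes x y :: "real ^ 'n::{finite,linorder}"
  assumes C: "connected C" "C \<subseteq> - shi_union" and "x \<in> C" "y \<in> C"
  shows "pattern x = pattern y"
proof (intro ext)
  fix j k :: 'n
  let ?f = "\<lambda>z. z $ j - z $ k"
  have "kind_of (?f x) = kind_of (?f y)" if "j < k"
  proof (rule kind_of_constant_on_interval)
    show "connected (?f ` C)"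
      by (rule connected_continuous_image[OF continuous_on_subset[OF continuous_coord_diff] C(1)]) simp
    show "0 \<notin> ?f ` C"
      using C(2) \<open>j < k\<close> unfolding shi_union_def by fastforce
    show "1 \<notin> ?f ` C"
      using C(2) \<open>j < k\<close> unfolding shi_union_def by fastforce
  qed (use \<open>x \<in> C\<close> \<open>y \<in> C\<close> in auto)
  then show "pattern x j k = pattern y j k" unfolding pattern_def by simp
qed

text \<open>The region of the Shi arrangement containing x is the cell of its sign pattern: the cell is
  convex (so connected) and avoids the arrangement, and the pattern is constant on the component.\<close>
lemma component_eq_cell:
  assumes x: "x \<notin> shi_union"
  shows "connected_component_set (- shi_union) x = cell (pattern x)"
proof
  have x_cell: "x \<in> cell (pattern x)"
    using cell_iff_pattern[OF pattern_normalised x] by simp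
  show "cell (pattern x) \<subseteq> connected_component_set (- shi_union) x"
    by (rule connected_component_maximal)
       (use x_cell convex_connected[OF convex_cell] cell_avoids_shi_union in auto)
next
  let ?C = "connected_component_set (- shi_union) x"
  show "?C \<subseteq> cell (pattern x)"
  proof
    fix y assume y: "y \<in> ?C"
    have C: "connected ?C" "?C \<subseteq> - shi_union" "x \<in> ?C"
      using x by (auto simp: connected_component_subset)
    then have "y \<notin> shi_union" using y by blast
    moreover have "pattern x = pattern y"
      using pattern_constant_on_connected[OF C y] .
    ultimately show "y \<in> cell (pattern x)"
      using cell_iff_pattern[OF pattern_normalised] by metis
  qed
qed

lemma arc_irrefl: "\<not> arc P u u"
  unfolding arc_def by auto

lemma arc_asym: "arc P u v \<Longrightarrow> \<not> arc P v u"
  unfolding arc_def by auto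

lemma arc_total: "u \<noteq> v \<Longrightarrow> arc P u v \<or> arc P v u"
  unfolding arc_def by (cases u v rule: linorder_cases) auto

lemma ordered_pair_kind:
  assumes "j < k"
  shows "ekind P k j = P j k" and "arc P j k \<longleftrightarrow> P j k = UpE" and "arc P k j \<longleftrightarrow> P j k \<noteq> UpE"
  using assms unfolding ekind_def arc_def by (auto dest: less_asym)

lemma arc_against_order: "arc P u v \<Longrightarrow> ekind P u v \<noteq> UpE \<Longrightarrow> v < u"
  unfolding arc_def ekind_def by auto

lemma arc_along_order: "arc P u v \<Longrightarrow> ekind P u v = UpE \<Longrightarrow> u < v"
  unfolding arc_def ekind_def by (auto split: if_splits)

text \<open>An acyclic tournament is transitive: a missing arc u -> w would close a 3-cycle.\<close>
lemma arc_trans: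
  assumes acyclic: "acyclic {(u, v). arc P u v}" and "arc P u v" "arc P v w"
  shows "arc P u w"
proof (rule ccontr)
  assume "\<not> arc P u w"
  moreover have "u \<noteq> w" using assms(2,3) arc_asym by blast
  ultimately have "arc P w u" using arc_total by blast
  with assms(2,3) have "(u, v) \<in> {(u, v). arc P u v}" "(v, w) \<in> {(u, v). arc P u v}"
    "(w, u) \<in> {(u, v). arc P u v}" by simp_all
  then have "(u, u) \<in> {(u, v). arc P u v}\<^sup>+"
    by (meson trancl.r_into_trancl trancl_into_trancl)
  with acyclic show False unfolding acyclic_def by blast
qed

lemma exists_sink:
  fixes P :: "'n::{finite,linorder} \<Rightarrow> 'n \<Rightarrow> edge_kind"
  assumes acyclic: "acyclic {(u, v). arc P u v}" and "I \<noteq> {}"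
  obtains w where "w \<in> I" "\<And>u. u \<in> I \<Longrightarrow> u \<noteq> w \<Longrightarrow> arc P u w"
proof -
  have "wf ({(u, v). arc P u v}\<inverse>)"
    by (rule finite_acyclic_wf_converse[OF _ acyclic]) simp
  then obtain w where "w \<in> I" and no_out: "\<And>u. (u, w) \<in> {(u, v). arc P u v}\<inverse> \<Longrightarrow> u \<notin> I"
    using wfE_min'[OF _ \<open>I \<noteq> {}\<close>] by blast
  show ?thesis
  proof (rule that[OF \<open>w \<in> I\<close>])
    fix u assume "u \<in> I" "u \<noteq> w"
    then show "arc P u w" using arc_total no_out by fastforce
  qed
qed

lemma downish_triangle:
  assumes ss: "source_sink_condition P"
    and arcs: "arc P a b" "arc P b c" "arc P a c"
    and downish: "ekind P a c = DownishE"
    and down: "ekind P a b = DownE \<or> ekind P b c = DownE"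
  shows False
proof -
  have distinct: "a \<noteq> b" "b \<noteq> c" "a \<noteq> c" using arcs arc_irrefl by auto
  have source: "\<forall>u\<in>{a, b, c}. \<not> arc P u a" using arcs arc_irrefl arc_asym by blast
  have sink: "\<forall>u\<in>{a, b, c}. \<not> arc P c u" using arcs arc_irrefl arc_asym by blast
  have kinds: "(\<exists>u\<in>{a, b, c}. \<exists>v\<in>{a, b, c}. u \<noteq> v \<and> ekind P u v = DownE) \<and>
        (\<exists>u\<in>{a, b, c}. \<exists>v\<in>{a, b, c}. u \<noteq> v \<and> ekind P u v = DownishE)"
    using down downish distinct by blast
  have "ekind P a c \<noteq> DownishE"
    by (rule ss[unfolded source_sink_condition_def, THEN conjunct2, rule_format, of a b c a c])
       (use distinct kinds source sink in auto)
  with downish show False by simp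
qed

text \<open>\<open>downish_spanned P u v\<close>: in the arc order, some downish arc a -> b satisfies
  a \<preceq> u and v \<preceq> b.  The realization keeps all such spanned differences below 1.\<close>
definition downish_spanned :: "('n::linorder \<Rightarrow> 'n \<Rightarrow> edge_kind) \<Rightarrow> 'n \<Rightarrow> 'n \<Rightarrow> bool" where
  "downish_spanned P u v \<longleftrightarrow>
     (\<exists>a b. arc P a b \<and> ekind P a b = DownishE \<and> (a = u \<or> arc P a u) \<and> (v = b \<or> arc P v b))"

lemma downish_spanned_shrink:
  assumes acyclic: "acyclic {(u, v). arc P u v}" and "downish_spanned P u v"
    and "u = u' \<or> arc P u u'" and "v' = v \<or> arc P v' v"
  shows "downish_spanned P u' v'"
proof -
  obtain a b where ab: "arc P a b" "ekind P a b = DownishE"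
    and au: "a = u \<or> arc P a u" and vb: "v = b \<or> arc P v b"
    using assms(2) unfolding downish_spanned_def by blast
  have "a = u' \<or> arc P a u'" using au assms(3) arc_trans[OF acyclic] by blast
  moreover have "v' = b \<or> arc P v' b" using vb assms(4) arc_trans[OF acyclic] by blast
  ultimately show ?thesis using ab unfolding downish_spanned_def by blast
qed

text \<open>The degenerate
  configurations are excluded by the triangle condition; in the general one, both diagonals
  would have to be up edges, forcing a cycle in the vertex order.\<close>
lemma spanned_arc_not_down:
  assumes pg: "parking_graph P" and spanned: "downish_spanned P c d" and cd: "arc P c d"
  shows "ekind P c d \<noteq> DownE"
proof
  assume dn: "ekind P c d = DownE"
  have ss: "source_sink_condition P" using pg unfolding parking_graph_def by blast
  have acyclic: "acyclic {(u, v). arc P u v}" using ss unfolding source_sink_condition_def by blast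
  obtain a b where ab: "arc P a b" and dab: "ekind P a b = DownishE"
    and ac: "a = c \<or> arc P a c" and db: "d = b \<or> arc P d b"
    using spanned unfolding downish_spanned_def by blast
  consider "a = c" "d = b" | "a = c" "arc P d b" | "arc P a c" "d = b" | "arc P a c" "arc P d b"
    using ac db by blast
  then show False
  proof cases
    case 1 with dab dn show False by simp
  next
    case 2 then show False using downish_triangle[OF ss, of a d b] cd ab dab dn by simp
  next
    case 3 then show False using downish_triangle[OF ss, of a c b] cd ab dab dn by simp
  next
    case 4
    text \<open>The four vertices would form the cycle a < d < c < b < a in the vertex order.\<close>
    have ad: "arc P a d" and cb: "arc P c b" using 4 cd arc_trans[OF acyclic] by blast+
    have "ekind P a d = UpE"
      using downish_triangle[OF ss, of a d b] downish_triangle[OF ss, of a c d] 4 ad ab dab cd dn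
      by (cases "ekind P a d") auto
    moreover have "ekind P c b = UpE"
      using downish_triangle[OF ss, of a c b] downish_triangle[OF ss, of c d b] 4 cb ab dab cd dn
      by (cases "ekind P c b") auto
    ultimately have "a < d" "c < b" using arc_along_order ad cb by blast+
    moreover have "d < c" "b < a"
      using arc_against_order[OF cd] arc_against_order[OF ab] dn dab by simp_all
    ultimately show False by simp
  qed
qed

definition realizes :: "('n::linorder \<Rightarrow> 'n \<Rightarrow> edge_kind) \<Rightarrow> 'n set \<Rightarrow> ('n \<Rightarrow> real) \<Rightarrow> bool" where
  "realizes P I y \<longleftrightarrow> (\<forall>u\<in>I. \<forall>v\<in>I. arc P u v \<longrightarrow>
      y u < y v \<and>
      (downish_spanned P u v \<longrightarrow> y v < y u + 1) \<and>
      (ekind P u v = DownE \<longrightarrow> y u + 1 < y v))"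

lemma realizesD:
  assumes "realizes P I y" "u \<in> I" "v \<in> I" "arc P u v"
  shows "y u < y v"
    and "downish_spanned P u v \<Longrightarrow> y v < y u + 1"
    and "ekind P u v = DownE \<Longrightarrow> y u + 1 < y v"
  using assms unfolding realizes_def by blast+

text \<open>Adding a sink w to a realized set: the lower bounds for y w (all y u, and y d + 1 for
  down arcs d -> w) lie below the upper bounds (y a + 1 for arcs a -> w spanned by a downish
  arc).\<close>
lemma sink_bounds_consistent:
  assumes pg: "parking_graph P" and y: "realizes P I y"
    and sink: "\<And>u. u \<in> I \<Longrightarrow> arc P u w"
    and a: "a \<in> I" "downish_spanned P a w"
  shows "u \<in> I \<Longrightarrow> y u < y a + 1"
    and "d \<in> I \<Longrightarrow> ekind P d w = DownE \<Longrightarrow> y d < y a"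
proof -
  have acyclic: "acyclic {(u, v). arc P u v}"
    using pg unfolding parking_graph_def source_sink_condition_def by blast
  show "y u < y a + 1" if u: "u \<in> I"
  proof -
    consider "u = a" | "arc P u a" | "arc P a u" using arc_total by blast
    then show ?thesis
    proof cases
      case 3
      have "downish_spanned P a u"
        using downish_spanned_shrink[OF acyclic a(2)] sink[OF u] by blast
      then show ?thesis using realizesD(2)[OF y a(1) u 3] by simp
    qed (use realizesD(1)[OF y u a(1)] in simp_all)
  qed
  show "y d < y a" if d: "d \<in> I" "ekind P d w = DownE"
  proof -
    have "\<not> downish_spanned P d w"
      using spanned_arc_not_down[OF pg _ sink[OF d(1)]] d(2) by blast
    then have "d \<noteq> a" "\<not> arc P a d"
      using a(2) downish_spanned_shrink[OF acyclic a(2)] by blast+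
    then have "arc P d a" using arc_total by blast
    then show ?thesis using realizesD(1)[OF y d(1) a(1)] by simp
  qed
qed

lemma exists_between:
  fixes L U :: "real set"
  assumes "finite L" "finite U" "\<And>l r. l \<in> L \<Longrightarrow> r \<in> U \<Longrightarrow> l < r"
  obtains t where "\<And>l. l \<in> L \<Longrightarrow> l < t" "\<And>r. r \<in> U \<Longrightarrow> t < r"
proof (cases "U = {}")
  case True
  have "l < Max (insert 0 L) + 1" if "l \<in> L" for l
  proof -
    have "l \<le> Max (insert 0 L)" using assms(1) that by (intro Max_ge) auto
    then show ?thesis by simp
  qed
  then show ?thesis using True that by blast
next
  case False
  define m where "m = Max (insert (Min U - 1) L)"
  have "Min U \<in> U" using assms(2) False by simp
  then have "\<forall>l\<in>insert (Min U - 1) L. l < Min U" using assms(3) by auto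
  then have "m < Min U" unfolding m_def using assms(1) by (subst Max_less_iff) auto
  moreover have "l \<le> m" if "l \<in> L" for l
    unfolding m_def using assms(1) that by simp
  ultimately show ?thesis
    using assms(2) by (intro that[of "(m + Min U) / 2"]) (fastforce dest: Min_le)+
qed

lemma realizes_add_sink:
  fixes P :: "'n::{finite,linorder} \<Rightarrow> 'n \<Rightarrow> edge_kind"
  assumes pg: "parking_graph P" and y: "realizes P I y" and "w \<notin> I"
    and sink: "\<And>u. u \<in> I \<Longrightarrow> arc P u w"
  obtains t where "realizes P (insert w I) (y(w := t))"
proof -
  define L where "L = y ` I \<union> (\<lambda>d. y d + 1) ` {d\<in>I. ekind P d w = DownE}"
  define U where "U = (\<lambda>a. y a + 1) ` {a\<in>I. downish_spanned P a w}"
  have "finite L" "finite U" unfolding L_def U_def by simp_all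
  moreover have "l < r" if "l \<in> L" "r \<in> U" for l r
    using that sink_bounds_consistent[OF pg y sink] unfolding L_def U_def by fastforce
  ultimately obtain t where lower: "\<And>l. l \<in> L \<Longrightarrow> l < t" and upper: "\<And>r. r \<in> U \<Longrightarrow> t < r"
    using exists_between by metis
  have "y u < t \<and> (downish_spanned P u w \<longrightarrow> t < y u + 1) \<and> (ekind P u w = DownE \<longrightarrow> y u + 1 < t)"
    if "u \<in> I" for u
    using that lower upper unfolding L_def U_def by blast
  moreover have "\<not> arc P w v" if "v \<in> I" for v
    using arc_asym sink that by blast
  ultimately have "realizes P (insert w I) (y(w := t))"
    using y \<open>w \<notin> I\<close> arc_irrefl[of P w] unfolding realizes_def by auto
  then show ?thesis by (rule that)
qed

lemma realizes_exists:
  fixes P :: "'n::{finite,linorder} \<Rightarrow> 'n \<Rightarrow> edge_kind"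
  assumes pg: "parking_graph P"
  shows "\<exists>y. realizes P I y"
proof (induction "card I" arbitrary: I rule: less_induct)
  case less
  show ?case
  proof (cases "I = {}")
    case True then show ?thesis unfolding realizes_def by blast
  next
    case False
    have acyclic: "acyclic {(u, v). arc P u v}"
      using pg unfolding parking_graph_def source_sink_condition_def by blast
    obtain w where w: "w \<in> I" and sink: "\<And>u. u \<in> I \<Longrightarrow> u \<noteq> w \<Longrightarrow> arc P u w"
      using exists_sink[OF acyclic False] by blast
    have "card (I - {w}) < card I" using card_Diff1_less[OF _ w] by simp
    then obtain y where "realizes P (I - {w}) y" using less by blast
    then obtain t where "realizes P (insert w (I - {w})) (y(w := t))"
      using realizes_add_sink[OF pg] sink by blast
    then show ?thesis using w by (auto simp: insert_absorb)
  qed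
qed

lemma cell_nonempty:
  fixes P :: "'n::{finite,linorder} \<Rightarrow> 'n \<Rightarrow> edge_kind"
  assumes pg: "parking_graph P"
  obtains x where "x \<in> cell P"
proof -
  obtain y where y: "realizes P UNIV y" using realizes_exists[OF pg] by blast
  have "(\<chi> i. y i) $ j - (\<chi> i. y i) $ k \<in> open_range (P j k)" if "j < k" for j k
  proof (cases "P j k")
    case DownE
    then have "arc P k j" "ekind P k j = DownE" using ordered_pair_kind[OF \<open>j < k\<close>] by simp_all
    then show ?thesis using realizesD(3)[OF y UNIV_I UNIV_I, of k j] DownE by (simp add: open_range_def)
  next
    case DownishE
    then have arc: "arc P k j" and "ekind P k j = DownishE"
      using ordered_pair_kind[OF \<open>j < k\<close>] by simp_all
    then have "downish_spanned P k j" unfolding downish_spanned_def by blast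
    then show ?thesis using realizesD(1,2)[OF y _ _ arc] DownishE by (simp add: open_range_def)
  next
    case UpE
    then have "arc P j k" using ordered_pair_kind[OF \<open>j < k\<close>] by simp
    then show ?thesis using realizesD(1)[OF y UNIV_I UNIV_I, of j k] UpE by (simp add: open_range_def)
  qed
  then show ?thesis using that unfolding cell_def by blast
qed

lemma kind_of_UpE: "kind_of d = UpE \<longleftrightarrow> d \<le> 0"
  unfolding kind_of_def by simp

lemma kind_of_length:
  shows "kind_of d = DownishE \<Longrightarrow> d \<noteq> 1 \<Longrightarrow> \<bar>d\<bar> < 1"
    and "kind_of d = DownE \<Longrightarrow> 1 < \<bar>d\<bar>"
  unfolding kind_of_def by (auto split: if_splits)

lemma pattern_ordered_pair:
  assumes "j < k"
  shows "ekind (pattern x) j k = kind_of (x $ j - x $ k)"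
    and "ekind (pattern x) k j = kind_of (x $ j - x $ k)"
    and "arc (pattern x) j k \<longleftrightarrow> x $ j - x $ k \<le> 0"
    and "arc (pattern x) k j \<longleftrightarrow> 0 < x $ j - x $ k"
  using assms less_asym[OF assms] ordered_pair_kind[OF assms, of "pattern x"]
  by (simp_all add: ekind_def pattern_def kind_of_UpE not_le)

lemma arc_pattern:
  assumes x: "x \<notin> shi_union"
  shows "arc (pattern x) u v \<longleftrightarrow> u \<noteq> v \<and> x $ u < x $ v"
proof (cases u v rule: linorder_cases)
  case less
  then have "x $ u - x $ v \<noteq> 0" using x unfolding not_in_shi_union by blast
  with less show ?thesis by (auto simp: pattern_ordered_pair(3))
next
  case greater
  then have "x $ v - x $ u \<noteq> 0" using x unfolding not_in_shi_union by blast
  with greater show ?thesis by (auto simp: pattern_ordered_pair(4))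
qed (simp add: arc_irrefl)

lemma ekind_pattern_length:
  assumes x: "x \<notin> shi_union" and "u \<noteq> v"
  shows "ekind (pattern x) u v = DownishE \<Longrightarrow> \<bar>x $ u - x $ v\<bar> < 1"
    and "ekind (pattern x) u v = DownE \<Longrightarrow> 1 < \<bar>x $ u - x $ v\<bar>"
proof -
  obtain j k where "j < k" and uv: "{u, v} = {j, k}"
    using \<open>u \<noteq> v\<close> by (cases u v rule: linorder_cases) auto
  then have kind: "ekind (pattern x) u v = kind_of (x $ j - x $ k)"
    and length: "\<bar>x $ u - x $ v\<bar> = \<bar>x $ j - x $ k\<bar>"
    using pattern_ordered_pair(1,2)[OF \<open>j < k\<close>] \<open>u \<noteq> v\<close> by (auto simp: doubleton_eq_iff abs_minus_commute)
  have "x $ j - x $ k \<noteq> 1" using x \<open>j < k\<close> unfolding not_in_shi_union by blast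
  then show "ekind (pattern x) u v = DownishE \<Longrightarrow> \<bar>x $ u - x $ v\<bar> < 1"
    and "ekind (pattern x) u v = DownE \<Longrightarrow> 1 < \<bar>x $ u - x $ v\<bar>"
    unfolding kind length using kind_of_length by blast+
qed

text \<open>A sign pattern is acyclic since its arcs increase the coordinate, and it satisfies the
  triangle part of the source-sink condition by the distance estimates above.\<close>
lemma pattern_source_sink:
  assumes x: "x \<notin> shi_union"
  shows "source_sink_condition (pattern x)"
  unfolding source_sink_condition_def
proof (intro conjI allI impI ballI)
  let ?S = "{(u, v). x $ u < x $ v}"
  have "{(u, v). arc (pattern x) u v} \<subseteq> ?S" using arc_pattern[OF x] by auto
  then have "{(u, v). arc (pattern x) u v}\<^sup>+ \<subseteq> ?S\<^sup>+" by (rule trancl_mono_subset)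
  also have "?S\<^sup>+ = ?S" by (rule trancl_id) (auto simp: trans_def)
  finally show "acyclic {(u, v). arc (pattern x) u v}" unfolding acyclic_def by auto
next
  fix a b c s t
  assume kinds: "a \<noteq> b \<and> b \<noteq> c \<and> a \<noteq> c \<and>
      (\<exists>u\<in>{a, b, c}. \<exists>v\<in>{a, b, c}. u \<noteq> v \<and> ekind (pattern x) u v = DownE) \<and>
      (\<exists>u\<in>{a, b, c}. \<exists>v\<in>{a, b, c}. u \<noteq> v \<and> ekind (pattern x) u v = DownishE)"
    and "s \<in> {a, b, c}" "t \<in> {a, b, c}"
    and st: "s \<noteq> t \<and> (\<forall>u\<in>{a, b, c}. \<not> arc (pattern x) u s) \<and> (\<forall>u\<in>{a, b, c}. \<not> arc (pattern x) t u)"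
  text \<open>All three coordinates lie in the interval from the source to the sink; a downish
    source-sink edge makes it shorter than 1, a down edge inside it longer than 1.\<close>
  show "ekind (pattern x) s t \<noteq> DownishE"
  proof
    assume "ekind (pattern x) s t = DownishE"
    then have short: "\<bar>x $ s - x $ t\<bar> < 1" using ekind_pattern_length(1)[OF x] st by blast
    have lo: "x $ s \<le> x $ w" if "w \<in> {a, b, c}" for w
    proof -
      have "\<not> arc (pattern x) w s" using st that by blast
      then show ?thesis using arc_pattern[OF x, of w s] by (cases "w = s") auto
    qed
    have hi: "x $ w \<le> x $ t" if "w \<in> {a, b, c}" for w
    proof -
      have "\<not> arc (pattern x) t w" using st that by blast
      then show ?thesis using arc_pattern[OF x, of t w] by (cases "w = t") auto
    qed
    obtain u v where uv: "u \<in> {a, b, c}" "v \<in> {a, b, c}" "u \<noteq> v" "ekind (pattern x) u v = DownE"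
      using kinds by blast
    have "1 < \<bar>x $ u - x $ v\<bar>" using ekind_pattern_length(2)[OF x uv(3,4)] .
    with short lo[OF uv(1)] lo[OF uv(2)] hi[OF uv(1)] hi[OF uv(2)] show False by linarith
  qed
qed

lemma parking_graph_pattern: "x \<notin> shi_union \<Longrightarrow> parking_graph (pattern x)"
  unfolding parking_graph_def using pattern_normalised pattern_source_sink by blast

lemma parking_graph_iff_pattern:
  fixes P :: "'n::{finite,linorder} \<Rightarrow> 'n \<Rightarrow> edge_kind"
  shows "parking_graph P \<longleftrightarrow> (\<exists>x. x \<notin> shi_union \<and> P = pattern x)"
proof
  assume pg: "parking_graph P"
  obtain x where x: "x \<in> cell P" using cell_nonempty[OF pg] .
  then have off: "x \<notin> shi_union" by (rule cell_avoids_shi_union)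
  have "normalised_mg P" using pg unfolding parking_graph_def by simp
  with off x have "P = pattern x" using cell_iff_pattern by blast
  with off show "\<exists>x. x \<notin> shi_union \<and> P = pattern x" by blast
next
  assume "\<exists>x. x \<notin> shi_union \<and> P = pattern x"
  then obtain x where "x \<notin> shi_union" "P = pattern x" by blast
  then show "parking_graph P" by (simp add: parking_graph_pattern)
qed

lemma interior_psi_pattern:
  "x \<notin> shi_union \<Longrightarrow> interior (psi (pattern x)) = connected_component_set (- shi_union) x"
  by (simp add: interior_psi component_eq_cell)

lemma interior_psi_region:
  fixes P :: "'n::{finite,linorder} \<Rightarrow> 'n \<Rightarrow> edge_kind"
  assumes "parking_graph P"
  shows "interior (psi P) \<noteq> {} \<and> interior (psi P) \<in> shi_regions"
proof -
  obtain x where x: "x \<notin> shi_union" and "P = pattern x"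
    using assms parking_graph_iff_pattern by blast
  then have "interior (psi P) = connected_component_set (- shi_union) x"
    by (simp add: interior_psi_pattern)
  moreover have "x \<in> connected_component_set (- shi_union) x" using x by simp
  ultimately show ?thesis using x unfolding shi_regions_def by blast
qed

text \<open>Distinct parking graphs give distinct regions: a point of the region determines P.\<close>
lemma inj_interior_psi:
  "inj_on (\<lambda>P. interior (psi P)) {P :: 'n::{finite,linorder} \<Rightarrow> 'n \<Rightarrow> edge_kind. parking_graph P}"
proof (rule inj_onI)
  fix P Q :: "'n \<Rightarrow> 'n \<Rightarrow> edge_kind"
  assume "P \<in> {P. parking_graph P}" and Q: "Q \<in> {P. parking_graph P}"
    and same: "interior (psi P) = interior (psi Q)"
  then obtain x where x: "x \<notin> shi_union" and P: "P = pattern x"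
    using parking_graph_iff_pattern by blast
  then have "x \<in> cell Q" using same interior_psi_pattern[OF x] by (simp add: interior_psi)
  moreover have "normalised_mg Q" using Q unfolding parking_graph_def by simp
  ultimately have "Q = pattern x" using x cell_iff_pattern by blast
  with P show "P = Q" by simp
qed

text \<open>Every region arises, namely from the sign pattern of any of its points.\<close>
lemma image_interior_psi:
  "(\<lambda>P. interior (psi P)) ` {P :: 'n::{finite,linorder} \<Rightarrow> 'n \<Rightarrow> edge_kind. parking_graph P} = shi_regions"
proof (intro equalityI image_subsetI subsetI)
  fix C :: "(real, 'n) vec set" assume "C \<in> shi_regions"
  then obtain x where x: "x \<notin> shi_union" and "C = connected_component_set (- shi_union) x"
    unfolding shi_regions_def by blast
  then have "C = interior (psi (pattern x))" by (simp add: interior_psi_pattern)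
  with parking_graph_pattern[OF x] show "C \<in> (\<lambda>P. interior (psi P)) ` {P. parking_graph P}" by blast
qed (use interior_psi_region in blast)

theorem theorem2p1:
  shows "(\<forall>P :: 'n::{finite,linorder} \<Rightarrow> 'n \<Rightarrow> edge_kind. parking_graph P \<longrightarrow>
            interior (psi P) \<noteq> {} \<and> interior (psi P) \<in> shi_regions) \<and>
         bij_betw (\<lambda>P. interior (psi P)) {P :: 'n \<Rightarrow> 'n \<Rightarrow> edge_kind. parking_graph P} shi_regions"
  using interior_psi_region inj_interior_psi image_interior_psi unfolding bij_betw_def by blast

end
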